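(* Let $\phi_*\in(0,\pi/2)$, $R\ge r=1$, and consider the billiard map on $Q(\phi_*,R)$. Let $x\in M_r$ with $n_1=0$ (exactly one reflection on $\Gamma_R$ between $x_0$ and $x_2$), and let $\tau_0=|p(x_0)p(x_1)|$, $\tau_1=|p(x_1)p(x_2)|$. If $$\frac{2}{d_1}<\frac1{\tau_0}+\frac1{\tau_1},$$ then the orbit segment $(x_0,x_1,x_2)$ is negatively defocusing.
   Context: Setting: $r=1$, $Q(\phi_*,R)=D(O_r,r)\cap D(O_R,R)$ with $|O_rO_R|=\sqrt{R^2-r^2\sin^2\phi_*}-r\cos\phi_*$; its boundary consists of $\Gamma_r$ (a major arc of $\partial D(O_r,r)$, position angles $[\phi_*,2\pi-\phi_*]$) and $\Gamma_R\subset\partial D(O_R,R)$. Phase space $M=M_r\sqcup M_R$, coordinates $(\phi,\theta)$ with $\theta\in(0,\pi)$ the angle from the positive tangent direction; $p(x)$ the base point; $F$ the billiard map. $M_r^{out}=M_r\cap F^{-1}(M_R)$, $M_R^{out}=M_R\cap F^{-1}(M_r)$. For $x\in M_r$: $x_0=F^{n_0}x$ with $n_0=\inf\{n\ge0:F^nx\in M_r^{out}\}$, $x_1=Fx_0$, $n_1=\inf\{n\ge0:F^nx_1\in M_R^{out}\}$, $x_2=F^{n_1+1}x_1$; $d_0=r\sin\theta(x_0)$, $d_1=R\sin\theta(x_1)$, $d_2=r\sin\theta(x_2)$. Derivative: $D_xF=\frac1{d(Fx)}\begin{bmatrix}\tau-d(x)&\tau\\ \tau-d(x)-d(Fx)&\tau-d(Fx)\end{bmatrix}$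 with $d(x)=\rho\sin\theta$ ($\rho$ the radius of the arc of $p(x)$), $\tau=|p(x)p(Fx)|$. A segment $(F^kx)_{m\le k\le n}$ is negatively defocusing if all four entries of $D_{F^mx}F^{n-m}$ in $(\phi,\theta)$ coordinates are negative. *)

theory Defs
  imports "HOL-Analysis.Analysis"
begin

text \<open>O_r = 0 and O_R lies on the negative real
  axis at distance |O_r O_R| = sqrt(R^2 - sin^2 phi_*) - cos phi_*, so that
  Gamma_r is the arc of the unit circle with position angles [phi_*, 2 pi - phi_*]
  and Gamma_R is the arc of the circle of radius R around O_R with position
  angles (-psi_*, psi_*), psi_* = arcsin(sin phi_* / R).\<close>

datatype side = Sr | SR

text \<open>A phase point: (arc, position angle phi, angle theta from the positive tangent).\<close>
type_synonym phase = "side \<times> real \<times> real"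

definition dist_OO :: "real \<Rightarrow> real \<Rightarrow> real" where
  "dist_OO phis R = sqrt (R\<^sup>2 - (sin phis)\<^sup>2) - cos phis"

definition center :: "real \<Rightarrow> real \<Rightarrow> side \<Rightarrow> complex" where
  "center phis R s = (case s of Sr \<Rightarrow> 0 | SR \<Rightarrow> - complex_of_real (dist_OO phis R))"

definition radius :: "real \<Rightarrow> side \<Rightarrow> real" where
  "radius R s = (case s of Sr \<Rightarrow> 1 | SR \<Rightarrow> R)"

definition table :: "real \<Rightarrow> real \<Rightarrow> complex set" where
  "table phis R = cball (center phis R Sr) 1 \<inter> cball (center phis R SR) R"

definition psi_star :: "real \<Rightarrow> real \<Rightarrow> real" where
  "psi_star phis R = arcsin (sin phis / R)"

definition Mr :: "real \<Rightarrow> phase set" where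
  "Mr phis = {(Sr, phi, th) | phi th. phis \<le> phi \<and> phi \<le> 2 * pi - phis \<and> 0 < th \<and> th < pi}"

definition MR :: "real \<Rightarrow> real \<Rightarrow> phase set" where
  "MR phis R = {(SR, psi, th) | psi th. - psi_star phis R < psi \<and> psi < psi_star phis R
                                        \<and> 0 < th \<and> th < pi}"

text \<open>Base point p(x) and outgoing unit velocity (positive tangent = counterclockwise).\<close>
definition pos :: "real \<Rightarrow> real \<Rightarrow> phase \<Rightarrow> complex" where
  "pos phis R x = center phis R (fst x) + complex_of_real (radius R (fst x)) * cis (fst (snd x))"

definition vel :: "phase \<Rightarrow> complex" where
  "vel x = cis (fst (snd x) + pi / 2 + snd (snd x))"

definition flight :: "real \<Rightarrow> real \<Rightarrow> phase \<Rightarrow> real" where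
  "flight phis R x = Sup {t. 0 \<le> t \<and> pos phis R x + complex_of_real t * vel x \<in> table phis R}"

definition hitpt :: "real \<Rightarrow> real \<Rightarrow> phase \<Rightarrow> complex" where
  "hitpt phis R x = pos phis R x + complex_of_real (flight phis R x) * vel x"

definition angle_r :: "complex \<Rightarrow> real" where
  "angle_r q = (if Arg q < 0 then Arg q + 2 * pi else Arg q)"

text \<open>The billiard map F: fly to the next boundary point, then reflect
  (outgoing angle from the positive tangent = minus the angle of the incoming velocity).\<close>
definition Fb :: "real \<Rightarrow> real \<Rightarrow> phase \<Rightarrow> phase" where
  "Fb phis R x =
     (let q = hitpt phis R x in
      if cmod q = 1 \<and> phis \<le> angle_r q \<and> angle_r q \<le> 2 * pi - phis
      then (Sr, angle_r q, - Arg (vel x / cis (angle_r q + pi / 2)))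
      else (let a = Arg (q - center phis R SR) in
            (SR, a, - Arg (vel x / cis (a + pi / 2)))))"

definition Mr_out :: "real \<Rightarrow> real \<Rightarrow> phase set" where
  "Mr_out phis R = Mr phis \<inter> Fb phis R -` MR phis R"

definition MR_out :: "real \<Rightarrow> real \<Rightarrow> phase set" where
  "MR_out phis R = MR phis R \<inter> Fb phis R -` Mr phis"

definition dd :: "real \<Rightarrow> phase \<Rightarrow> real" where
  "dd R x = radius R (fst x) * sin (snd (snd x))"

text \<open>Derivative D_xF in (phi,theta) coordinates, as given by the stated formula.\<close>
definition DF :: "real \<Rightarrow> real \<Rightarrow> phase \<Rightarrow> real^2^2" where
  "DF phis R x =
     (let y = Fb phis R x; tau = cmod (pos phis R x - pos phis R y); d = dd R x; d' = dd R y in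
      (\<chi> i j. (1 / d') *
         (if i = 1 then (if j = 1 then tau - d else tau)
          else (if j = 1 then tau - d - d' else tau - d'))))"

fun DFn :: "real \<Rightarrow> real \<Rightarrow> phase \<Rightarrow> nat \<Rightarrow> real^2^2" where
  "DFn phis R x 0 = mat 1"
| "DFn phis R x (Suc n) = DF phis R ((Fb phis R ^^ n) x) ** DFn phis R x n"

definition neg_defocusing :: "real \<Rightarrow> real \<Rightarrow> phase \<Rightarrow> nat \<Rightarrow> nat \<Rightarrow> bool" where
  "neg_defocusing phis R x m n =
     (\<forall>i j. DFn phis R ((Fb phis R ^^ m) x) (n - m) $ i $ j < 0)"

end

theory Submission
  imports Defs
begin

text \<open>Up to the positive factor 1/(2 d_1 d_2), the entries of D_{x_1}F D_{x_0}F are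
  X Y - d_1^2 with X \<in> {A, A - 2 d_0}, Y \<in> {B, B - 2 d_2}, where A = 2 tau_0 - d_1 and
  B = 2 tau_1 - d_1. The hypothesis gives A B < d_1^2, which settles the entries
  with X, Y \<ge> 0; entries with X Y \<le> 0 are trivially negative. When X, Y < 0 it suffices
  that X + Y > -2 d_1, i.e. tau_0 + tau_1 > d_0 + d_2. This is the geometric input:
  projecting both chords onto their directions, tau_0 + tau_1 - d_0 - d_2 equals
  2 sin theta_1 (R - |O_r O_R| cos psi_1) > 0, psi_1 being the position angle of x_1.\<close>

lemma cos_le_cos_iff_in_arc:
  assumes "0 \<le> phis" "phis \<le> pi" "0 \<le> p" "p < 2 * pi"
  shows "cos p \<le> cos phis \<longleftrightarrow> phis \<le> p \<and> p \<le> 2 * pi - phis"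
proof (cases "p \<le> pi")
  case True
  then have "cos p \<le> cos phis \<longleftrightarrow> phis \<le> p"
    using assms by (intro cos_mono_le_eq) auto
  moreover have "p \<le> 2 * pi - phis" using True assms(2) by linarith
  ultimately show ?thesis by blast
next
  case False
  have "cos p = cos (2 * pi - p)" by (simp add: cos_diff)
  moreover have "cos (2 * pi - p) \<le> cos phis \<longleftrightarrow> phis \<le> 2 * pi - p"
    using False assms by (intro cos_mono_le_eq) auto
  moreover have "phis \<le> p" using False assms(2) by linarith
  ultimately show ?thesis by linarith
qed

lemma angle_r_bounds: "0 \<le> angle_r q" "angle_r q < 2 * pi"
  using Arg_bounded[of q] unfolding angle_r_def by auto

lemma cis_angle_r:
  assumes "q \<noteq> 0"
  shows "cis (angle_r q) = sgn q"
proof -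
  have "cis (Arg q + 2 * pi) = cis (Arg q)" by (simp add: cis_mult[symmetric])
  then show ?thesis unfolding angle_r_def using cis_Arg[OF assms] by auto
qed

lemma cis_add_Arg_div:
  assumes "cmod v = 1"
  shows "cis (a + Arg (v / cis a)) = v"
proof -
  have unit: "cmod (v / cis a) = 1" using assms by (simp add: norm_divide)
  then have "cis (Arg (v / cis a)) = sgn (v / cis a)" by (intro cis_Arg) auto
  also have "\<dots> = v / cis a" using unit by (simp add: sgn_div_norm)
  finally have "cis (Arg (v / cis a)) = v / cis a" .
  then show ?thesis by (simp add: cis_mult[symmetric])
qed

lemma Re_mult_cnj_cis: "Re (cis x * cnj (cis y)) = cos (x - y)"
  by (simp add: cis_cnj cis_mult)

lemma Re_mult_cnj_ray:
  assumes "cmod v = 1"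
  shows "Re ((P + complex_of_real t * v) * cnj v) = Re (P * cnj v) + t"
proof -
  have "v * cnj v = 1" using assms by (simp add: complex_mult_cnj cmod_def)
  then have "(P + complex_of_real t * v) * cnj v = P * cnj v + complex_of_real t"
    by (simp add: algebra_simps)
  then show ?thesis by simp
qed

lemma reflected_velocity_diff:
  "cis (a + pi / 2 - th) - cis (a + pi / 2 + th) = complex_of_real (2 * sin th) * cis a"
  by (simp add: complex_eq_iff cos_add sin_add cos_diff sin_diff algebra_simps)

lemma last_point_on_ray:
  fixes K :: "'a::real_normed_vector set"
  assumes "compact K" "P \<in> K" "v \<noteq> 0"
  defines "T \<equiv> Sup {t. 0 \<le> t \<and> P + t *\<^sub>R v \<in> K}"
  shows "0 \<le> T" "P + T *\<^sub>R v \<in> K" "P + T *\<^sub>R v \<notin> interior K"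
proof -
  define S where "S = {t. 0 \<le> t \<and> P + t *\<^sub>R v \<in> K}"
  obtain B where B: "\<And>z. z \<in> K \<Longrightarrow> norm z \<le> B"
    using compact_imp_bounded[OF assms(1)] by (auto simp: bounded_iff)
  have bdd: "bdd_above S"
  proof
    fix t assume "t \<in> S"
    then have "0 \<le> t" "norm (P + t *\<^sub>R v) \<le> B" using B unfolding S_def by auto
    moreover have "norm (t *\<^sub>R v) \<le> norm (P + t *\<^sub>R v) + norm P"
      using norm_triangle_ineq4[of "P + t *\<^sub>R v" P] by simp
    ultimately show "t \<le> (B + norm P) / norm v"
      using assms(3) by (simp add: field_simps)
  qed
  have "0 \<in> S" using assms(2) unfolding S_def by simp
  moreover have "closed S"
  proof -
    have "closed ((\<lambda>t. P + t *\<^sub>R v) -` K)"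
      by (intro continuous_closed_vimage compact_imp_closed assms(1) continuous_intros)
    then have "closed ({0..} \<inter> (\<lambda>t. P + t *\<^sub>R v) -` K)" by (intro closed_Int) auto
    moreover have "S = {0..} \<inter> (\<lambda>t. P + t *\<^sub>R v) -` K" unfolding S_def by auto
    ultimately show ?thesis by simp
  qed
  ultimately have "T \<in> S" using closed_contains_Sup[OF _ bdd] unfolding T_def S_def by blast
  then show "0 \<le> T" "P + T *\<^sub>R v \<in> K" unfolding S_def by auto
  show "P + T *\<^sub>R v \<notin> interior K"
  proof
    assume "P + T *\<^sub>R v \<in> interior K"
    then obtain e where e: "0 < e" "ball (P + T *\<^sub>R v) e \<subseteq> K"
      using open_contains_ball_eq[of "interior K"] interior_subset by blast
    define s where "s = e / (2 * norm v)"
    have s: "0 < s" "norm (s *\<^sub>R v) < e" using e assms(3) by (auto simp: s_def)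
    have "P + (T + s) *\<^sub>R v = (P + T *\<^sub>R v) + s *\<^sub>R v" by (simp add: algebra_simps)
    then have "P + (T + s) *\<^sub>R v \<in> K" using e s by (auto simp: dist_norm)
    then have "T + s \<in> S" using \<open>T \<in> S\<close> s unfolding S_def by simp
    then show False using cSup_upper[OF _ bdd] s unfolding T_def S_def by fastforce
  qed
qed

lemma dd_pos_Mr: "x \<in> Mr phis \<Longrightarrow> 0 < dd R x"
  by (auto simp: Mr_def dd_def radius_def sin_gt_zero)

lemma dd_pos_MR: "0 < R \<Longrightarrow> x \<in> MR phis R \<Longrightarrow> 0 < dd R x"
  by (auto simp: MR_def dd_def radius_def sin_gt_zero)

lemma compact_table: "compact (table phis R)"
  unfolding table_def by (intro compact_Int compact_cball closed_cball)

lemma table_iff: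
  "q \<in> table phis R \<longleftrightarrow> cmod q \<le> 1 \<and> cmod (q - center phis R SR) \<le> R"
  unfolding table_def by (simp add: center_def dist_norm norm_minus_commute)

lemma boundary_of_table:
  assumes "q \<in> table phis R" "q \<notin> interior (table phis R)"
  shows "cmod q = 1 \<or> cmod (q - center phis R SR) = R"
proof (rule ccontr)
  assume "\<not> ?thesis"
  then have "q \<in> {z. cmod z < 1} \<inter> {z. cmod (z - center phis R SR) < R}"
    using assms(1) unfolding table_iff by auto
  moreover have "open ({z. cmod z < 1} \<inter> {z. cmod (z - center phis R SR) < R})"
    by (intro open_Int open_Collect_less continuous_intros)
  moreover have "{z. cmod z < 1} \<inter> {z. cmod (z - center phis R SR) < R} \<subseteq> table phis R"
    by (auto simp: table_iff)
  ultimately show False using assms(2) interior_maximal by blast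
qed

lemma cmod_vel [simp]: "cmod (vel x) = 1"
  by (simp add: vel_def)

lemma hitpt_in_boundary:
  assumes "pos phis R x \<in> table phis R"
  shows "0 \<le> flight phis R x" "hitpt phis R x \<in> table phis R"
    "cmod (hitpt phis R x) = 1 \<or> cmod (hitpt phis R x - center phis R SR) = R"
proof -
  have "vel x \<noteq> 0" by (metis cmod_vel norm_zero zero_neq_one)
  note ray = last_point_on_ray[OF compact_table assms this]
  have hit: "hitpt phis R x = pos phis R x + flight phis R x *\<^sub>R vel x"
    unfolding hitpt_def flight_def by (simp add: scaleR_conv_of_real)
  show "0 \<le> flight phis R x" using ray(1) unfolding flight_def by (simp add: scaleR_conv_of_real)
  show "hitpt phis R x \<in> table phis R"
    using ray(2) unfolding hit flight_def by (simp add: scaleR_conv_of_real)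
  moreover have "hitpt phis R x \<notin> interior (table phis R)"
    using ray(3) unfolding hit flight_def by (simp add: scaleR_conv_of_real)
  ultimately show "cmod (hitpt phis R x) = 1 \<or> cmod (hitpt phis R x - center phis R SR) = R"
    by (rule boundary_of_table)
qed

lemma vel_before_Fb:
  "vel x = cis (fst (snd (Fb phis R x)) + pi / 2 - snd (snd (Fb phis R x)))"
  unfolding Fb_def Let_def using cis_add_Arg_div[OF cmod_vel, of _ x] by simp

lemma cmod_sub_center_SR_sq:
  "(cmod (q - center phis R SR))\<^sup>2
    = (cmod q)\<^sup>2 + 2 * dist_OO phis R * Re q + (dist_OO phis R)\<^sup>2"
  by (simp add: center_def cmod_power2 power2_sum algebra_simps)

locale billiard_table =
  fixes phis R :: real
  assumes phis_pos: "0 < phis" and phis_less: "phis < pi / 2" and R_ge_1: "1 \<le> R"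
begin

lemma sin_phis_pos: "0 < sin phis" and cos_phis_pos: "0 < cos phis"
  using phis_pos phis_less by (auto intro: sin_gt_zero cos_gt_zero)

lemma dist_OO_sq: "(dist_OO phis R)\<^sup>2 + 2 * dist_OO phis R * cos phis + 1 = R\<^sup>2"
proof -
  have "(sin phis)\<^sup>2 \<le> 1" using sin_cos_squared_add[of phis] by (smt (verit) zero_le_power2)
  moreover have "1 \<le> R\<^sup>2" using R_ge_1 by simp
  ultimately have "(sin phis)\<^sup>2 \<le> R\<^sup>2" by linarith
  then have "(dist_OO phis R + cos phis)\<^sup>2 = R\<^sup>2 - (sin phis)\<^sup>2"
    unfolding dist_OO_def by simp
  then show ?thesis by (simp add: power2_sum sin_squared_eq)
qed

lemma dist_OO_nonneg: "0 \<le> dist_OO phis R"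
proof -
  have "cos phis = sqrt (1 - (sin phis)\<^sup>2)"
    using cos_phis_pos by (simp add: cos_squared_eq[symmetric])
  also have "\<dots> \<le> sqrt (R\<^sup>2 - (sin phis)\<^sup>2)" using R_ge_1 by simp
  finally show ?thesis unfolding dist_OO_def by simp
qed

lemma dist_OO_less: "dist_OO phis R < R"
proof -
  have "sqrt (R\<^sup>2 - (sin phis)\<^sup>2) < sqrt (R\<^sup>2)"
    using sin_phis_pos by (intro real_sqrt_less_mono) simp
  then show ?thesis unfolding dist_OO_def using R_ge_1 cos_phis_pos by simp
qed

text \<open>On the unit circle the sign of |q O_R| - R is that of Re q - cos phi_*; this is why
  Gamma_r is exactly the arc of position angles [phi_*, 2 pi - phi_*].\<close>
lemma cmod_sub_center_SR_sq_unit: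
  assumes "cmod q = 1"
  shows "(cmod (q - center phis R SR))\<^sup>2 = R\<^sup>2 + 2 * dist_OO phis R * (Re q - cos phis)"
  using cmod_sub_center_SR_sq[of q] dist_OO_sq assms by (simp add: algebra_simps)

lemma pos_Mr_in_table:
  assumes "x \<in> Mr phis"
  shows "pos phis R x \<in> table phis R"
proof -
  obtain p th where x: "x = (Sr, p, th)" and p: "phis \<le> p" "p \<le> 2 * pi - phis"
    using assms unfolding Mr_def by auto
  have arc: "0 \<le> phis" "phis \<le> pi" "0 \<le> p" "p < 2 * pi"
    using phis_pos phis_less p pi_gt_zero by linarith+
  have "cos p \<le> cos phis" using cos_le_cos_iff_in_arc[OF arc] p by blast
  then have "dist_OO phis R * (Re (cis p) - cos phis) \<le> 0"
    using dist_OO_nonneg by (simp add: mult_nonneg_nonpos)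
  then have "(cmod (cis p - center phis R SR))\<^sup>2 \<le> R\<^sup>2"
    using cmod_sub_center_SR_sq_unit[of "cis p"] by simp
  then have "cmod (cis p - center phis R SR) \<le> R"
    by (rule power2_le_imp_le) (use R_ge_1 in simp)
  moreover have "pos phis R x = cis p" by (simp add: x pos_def center_def radius_def)
  ultimately show ?thesis by (simp add: table_iff)
qed

lemma unit_circle_outside_arc:
  assumes "cmod q = 1" "q \<in> table phis R"
    and "\<not> (phis \<le> angle_r q \<and> angle_r q \<le> 2 * pi - phis)"
  shows "cmod (q - center phis R SR) = R"
proof -
  have "q \<noteq> 0" using assms(1) by auto
  then have "cis (angle_r q) = q" using cis_angle_r[of q] assms(1) by (simp add: sgn_div_norm)
  then have "cos (angle_r q) = Re q" by (metis cis.sel(1))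
  then have "cos phis < Re q"
    using cos_le_cos_iff_in_arc[of phis "angle_r q"] angle_r_bounds[of q] phis_pos phis_less assms(3)
    by fastforce
  moreover have "(cmod (q - center phis R SR))\<^sup>2 \<le> R\<^sup>2"
    using assms(2) R_ge_1 by (simp add: table_iff power_mono)
  ultimately have "dist_OO phis R = 0"
    using cmod_sub_center_SR_sq_unit[OF assms(1)] dist_OO_nonneg
    by (smt (verit) mult_pos_pos)
  then show ?thesis
    using cmod_sub_center_SR_sq_unit[OF assms(1)] R_ge_1 by simp
qed

lemma pos_Fb:
  assumes "pos phis R x \<in> table phis R"
  shows "pos phis R (Fb phis R x) = hitpt phis R x"
proof -
  define q where "q = hitpt phis R x"
  note hit = hitpt_in_boundary[OF assms, folded q_def]
  show ?thesis
  proof (cases "cmod q = 1 \<and> phis \<le> angle_r q \<and> angle_r q \<le> 2 * pi - phis")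
    case True
    then have "q \<noteq> 0" by auto
    then show ?thesis using True cis_angle_r[of q]
      unfolding Fb_def Let_def q_def[symmetric] if_P[OF True]
      by (simp add: pos_def center_def radius_def sgn_div_norm)
  next
    case False
    then have R: "cmod (q - center phis R SR) = R" using hit unit_circle_outside_arc by auto
    then have "q - center phis R SR \<noteq> 0" using R_ge_1 by auto
    then have "complex_of_real R * cis (Arg (q - center phis R SR)) = q - center phis R SR"
      using R R_ge_1 by (simp add: cis_Arg sgn_div_norm scaleR_conv_of_real field_simps)
    then show ?thesis
      unfolding Fb_def Let_def q_def[symmetric] if_not_P[OF False] by (simp add: pos_def radius_def)
  qed
qed

lemma pos_Fb_ray:
  assumes "pos phis R x \<in> table phis R"
  shows "pos phis R (Fb phis R x) = pos phis R x + complex_of_real (flight phis R x) * vel x"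
    "pos phis R (Fb phis R x) \<in> table phis R"
    "cmod (pos phis R x - pos phis R (Fb phis R x)) = flight phis R x"
  using pos_Fb[OF assms] hitpt_in_boundary[OF assms] by (auto simp: hitpt_def norm_mult)

lemma dd_sum_less_free_paths:
  assumes "x0 \<in> Mr phis" "Fb phis R x0 \<in> MR phis R" "Fb phis R (Fb phis R x0) \<in> Mr phis"
  shows "dd R x0 + dd R (Fb phis R (Fb phis R x0))
    < cmod (pos phis R x0 - pos phis R (Fb phis R x0))
      + cmod (pos phis R (Fb phis R x0) - pos phis R (Fb phis R (Fb phis R x0)))"
proof -
  define x1 x2 where "x1 = Fb phis R x0" and "x2 = Fb phis R x1"
  obtain p0 th0 where x0: "x0 = (Sr, p0, th0)" using assms(1) unfolding Mr_def by auto
  obtain a th1 where x1: "x1 = (SR, a, th1)" and th1: "0 < th1" "th1 < pi"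
    using assms(2) unfolding MR_def x1_def by auto
  obtain b th2 where x2: "x2 = (Sr, b, th2)" using assms(3) unfolding Mr_def x1_def x2_def by auto
  define v0 v1 where "v0 = vel x0" and "v1 = vel x1"
  note ray0 = pos_Fb_ray[OF pos_Mr_in_table[OF assms(1)], folded x1_def v0_def]
  note ray1 = pos_Fb_ray[OF ray0(2), folded x2_def v1_def]
  have v0: "v0 = cis (p0 + pi / 2 + th0)" "v0 = cis (a + pi / 2 - th1)"
    using vel_before_Fb[of x0 phis R] unfolding v0_def x1_def[symmetric] x1
    by (simp_all add: vel_def x0)
  have v1: "v1 = cis (a + pi / 2 + th1)" "v1 = cis (b + pi / 2 - th2)"
    using vel_before_Fb[of x1 phis R] unfolding v1_def x2_def[symmetric] x2
    by (simp_all add: vel_def x1)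
  have q: "pos phis R x1 = complex_of_real R * cis a - dist_OO phis R"
    by (simp add: pos_def center_def radius_def x1)
  have "pos phis R x0 = cis p0" "pos phis R x2 = cis b"
    by (simp_all add: x0 x2 pos_def center_def radius_def)
  note on_unit_circle = this
  have "Re (pos phis R x0 * cnj v0) = - dd R x0"
    unfolding on_unit_circle v0(1) Re_mult_cnj_cis by (simp add: x0 dd_def radius_def cos_diff)
  then have t0: "flight phis R x0 = Re (pos phis R x1 * cnj v0) + dd R x0"
    using Re_mult_cnj_ray[of v0] ray0(1) by (simp add: v0_def)
  have "Re (pos phis R x2 * cnj v1) = dd R x2"
    unfolding on_unit_circle v1(2) Re_mult_cnj_cis by (simp add: x2 dd_def radius_def cos_diff)
  then have t1: "flight phis R x1 = dd R x2 - Re (pos phis R x1 * cnj v1)"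
    using Re_mult_cnj_ray[of v1] ray1(1) by (simp add: v1_def)
  have "Re (pos phis R x1 * cnj v0) - Re (pos phis R x1 * cnj v1)
      = Re (pos phis R x1 * cnj (v0 - v1))" by (simp add: algebra_simps)
  also have "\<dots> = 2 * sin th1 * Re (pos phis R x1 * cnj (cis a))"
    unfolding v0(2) v1(1) reflected_velocity_diff by (simp add: distrib_left mult_ac)
  also have "pos phis R x1 * cnj (cis a) = R - dist_OO phis R * cis (- a)"
    unfolding q by (simp add: cis_cnj left_diff_distrib mult.assoc cis_mult)
  finally have gap: "Re (pos phis R x1 * cnj v0) - Re (pos phis R x1 * cnj v1)
      = 2 * sin th1 * (R - dist_OO phis R * cos a)" by simp
  have "dist_OO phis R * cos a \<le> dist_OO phis R"
    using dist_OO_nonneg by (simp add: mult_left_le)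
  then have "0 < 2 * sin th1 * (R - dist_OO phis R * cos a)"
    using dist_OO_less th1 by (simp add: sin_gt_zero)
  then show ?thesis using ray0(3) ray1(3) t0 t1 gap unfolding x1_def x2_def by simp
qed

end

lemma mult_less_square_of_le:
  fixes X Y A B c :: real
  assumes "0 < c" "X \<le> A" "Y \<le> B" "A * B < c\<^sup>2" "- 2 * c < X + Y"
  shows "X * Y < c\<^sup>2"
proof (cases "0 \<le> X \<and> 0 \<le> Y")
  case True
  then have "X * Y \<le> A * B" using assms(2,3) by (intro mult_mono) auto
  then show ?thesis using assms(4) by linarith
next
  case False
  show ?thesis
  proof (cases "X < 0 \<and> Y < 0")
    case True
    have "4 * (X * Y) \<le> (X + Y)\<^sup>2" using sum_squares_ge_zero[of "X - Y" 0]
      by (simp add: power2_eq_square algebra_simps)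
    also have "\<dots> = (- (X + Y))\<^sup>2" by (rule power2_minus[symmetric])
    also have "\<dots> < (2 * c)\<^sup>2" using True assms(5) by (intro power_strict_mono) auto
    finally show ?thesis by (simp add: power2_eq_square)
  next
    case False
    with \<open>\<not> (0 \<le> X \<and> 0 \<le> Y)\<close> have "X * Y \<le> 0" by (auto simp: mult_le_0_iff)
    then show ?thesis using assms(1) by (smt (verit) zero_less_power2)
  qed
qed

text \<open>With 1/0 = 0 the hypothesis still excludes u = w = 0.\<close>
lemma harmonic_bound_imp_mult_less:
  fixes d u w :: real
  assumes "0 < d" "0 \<le> u" "0 \<le> w" "2 / d < 1 / u + 1 / w"
  shows "2 * u * w < d * (u + w)"
proof (cases "u = 0 \<or> w = 0")
  case True
  have "0 < 1 / u + 1 / w" using assms(1,4) by (smt (verit) divide_pos_pos)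
  then have "u \<noteq> 0 \<or> w \<noteq> 0" by auto
  then have "0 < u + w" using assms(2,3) by auto
  then show ?thesis using True assms(1) by auto
next
  case False
  then have "0 < u" "0 < w" using assms(2,3) by auto
  then show ?thesis using assms(1,4) by (simp add: field_simps)
qed

lemma two_bounce_entries_neg:
  fixes d0 d1 d2 u w :: real
  assumes "0 \<le> d0" "0 < d1" "0 < d2" "d0 + d2 < u + w" "2 * u * w < d1 * (u + w)"
  shows "(w - d1) * (u - d0) + w * (u - d0 - d1) < 0"
    "(w - d1) * u + w * (u - d1) < 0"
    "(w - d1 - d2) * (u - d0) + (w - d2) * (u - d0 - d1) < 0"
    "(w - d1 - d2) * u + (w - d2) * (u - d1) < 0"
proof -
  define A B where "A = 2 * u - d1" and "B = 2 * w - d1"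
  have sum: "- 2 * d1 < (A - 2 * d0) + (B - 2 * d2)"
    using assms(4) unfolding A_def B_def by simp
  have "A * B = d1\<^sup>2 + 2 * (2 * u * w - d1 * (u + w))"
    unfolding A_def B_def by (simp add: algebra_simps power2_eq_square)
  then have prod: "A * B < d1\<^sup>2" using assms(5) by simp
  have "(A - 2 * d0) * B < d1\<^sup>2" "A * (B - 2 * d2) < d1\<^sup>2"
    "(A - 2 * d0) * (B - 2 * d2) < d1\<^sup>2"
    using assms(1-3) sum prod
    by (auto intro: mult_less_square_of_le[where A = A and B = B and c = d1])
  moreover have "(w - d1) * (u - d0) + w * (u - d0 - d1) = ((A - 2 * d0) * B - d1\<^sup>2) / 2"
    "(w - d1) * u + w * (u - d1) = (A * B - d1\<^sup>2) / 2"
    "(w - d1 - d2) * (u - d0) + (w - d2) * (u - d0 - d1)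
      = ((A - 2 * d0) * (B - 2 * d2) - d1\<^sup>2) / 2"
    "(w - d1 - d2) * u + (w - d2) * (u - d1) = (A * (B - 2 * d2) - d1\<^sup>2) / 2"
    unfolding A_def B_def by (simp_all add: algebra_simps power2_eq_square)
  ultimately show "(w - d1) * (u - d0) + w * (u - d0 - d1) < 0"
    "(w - d1) * u + w * (u - d1) < 0"
    "(w - d1 - d2) * (u - d0) + (w - d2) * (u - d0 - d1) < 0"
    "(w - d1 - d2) * u + (w - d2) * (u - d1) < 0"
    using prod by simp_all
qed

lemma neg_defocusing_two_bounces:
  fixes phis R :: real and x :: phase and m :: nat
  assumes x0_def: "x0 = (Fb phis R ^^ m) x" and x1_def: "x1 = Fb phis R x0"
    and x2_def: "x2 = Fb phis R x1"
    and u_def: "u = cmod (pos phis R x0 - pos phis R x1)"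
    and w_def: "w = cmod (pos phis R x1 - pos phis R x2)"
    and "0 \<le> dd R x0" "0 < dd R x1" "0 < dd R x2"
    and "dd R x0 + dd R x2 < u + w" and "2 * u * w < dd R x1 * (u + w)"
  shows "neg_defocusing phis R x m (m + 2)"
proof -
  define d0 d1 d2 where "d0 = dd R x0" and "d1 = dd R x1" and "d2 = dd R x2"
  have d: "0 \<le> d0" "0 < d1" "0 < d2" using assms(6-8) unfolding d0_def d1_def d2_def by simp_all
  have "d0 + d2 < u + w" "2 * u * w < d1 * (u + w)"
    using assms(9,10) unfolding d0_def d1_def d2_def by simp_all
  note entries = two_bounce_entries_neg[OF d this]
  have DF0: "DF phis R x0 = (\<chi> i j. (1 / d1) * (if i = 1 then (if j = 1 then u - d0 else u)
      else (if j = 1 then u - d0 - d1 else u - d1)))"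
    unfolding DF_def Let_def x1_def[symmetric] u_def[symmetric] d0_def d1_def ..
  have DF1: "DF phis R x1 = (\<chi> i j. (1 / d2) * (if i = 1 then (if j = 1 then w - d1 else w)
      else (if j = 1 then w - d1 - d2 else w - d2)))"
    unfolding DF_def Let_def x2_def[symmetric] w_def[symmetric] d1_def d2_def ..
  have DFn: "DFn phis R x0 2 = DF phis R x1 ** DF phis R x0"
    by (simp add: numeral_2_eq_2 x1_def)
  have scale: "1 / d2 * a * (1 / d1 * b) + 1 / d2 * c * (1 / d1 * e) < 0"
    if "a * b + c * e < 0" for a b c e
  proof -
    have "1 / d2 * a * (1 / d1 * b) + 1 / d2 * c * (1 / d1 * e) = (a * b + c * e) / (d1 * d2)"
      using d by (simp add: field_simps)
    then show ?thesis using that d by (simp add: divide_neg_pos)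
  qed
  have two: "m + 2 - m = 2" by simp
  show ?thesis
    unfolding neg_defocusing_def x0_def[symmetric] two DFn forall_2 matrix_matrix_mult_def DF0 DF1
    using scale[OF entries(1)] scale[OF entries(2)] scale[OF entries(3)] scale[OF entries(4)]
    by (simp add: sum_2)
qed

theorem mainTheorem7:
  fixes phis R :: real and x :: phase
  assumes "0 < phis" and "phis < pi / 2" and "1 \<le> R"
    and "x \<in> Mr phis"
    and "\<exists>n. (Fb phis R ^^ n) x \<in> Mr_out phis R"
    and "n0 = (LEAST n. (Fb phis R ^^ n) x \<in> Mr_out phis R)"
    and "x0 = (Fb phis R ^^ n0) x" and "x1 = Fb phis R x0" and "x2 = Fb phis R x1"
    and "(LEAST n. (Fb phis R ^^ n) x1 \<in> MR_out phis R) = 0"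
    and "\<exists>n. (Fb phis R ^^ n) x1 \<in> MR_out phis R"
    and "tau0 = cmod (pos phis R x0 - pos phis R x1)"
    and "tau1 = cmod (pos phis R x1 - pos phis R x2)"
    and "d1 = R * sin (snd (snd x1))"
    and "2 / d1 < 1 / tau0 + 1 / tau1"
  shows "neg_defocusing phis R x n0 (n0 + 2)"
proof -
  interpret billiard_table phis R using assms(1-3) by unfold_locales
  have "x0 \<in> Mr_out phis R" using LeastI_ex[OF assms(5)] assms(6,7) by simp
  moreover have "x1 \<in> MR_out phis R" using LeastI_ex[OF assms(11)] assms(10) by simp
  ultimately have x0: "x0 \<in> Mr phis" and x1: "x1 \<in> MR phis R" and x2: "x2 \<in> Mr phis"
    using assms(8,9) unfolding Mr_out_def MR_out_def by auto
  have d1: "d1 = dd R x1" using assms(14) x1 by (auto simp: dd_def radius_def MR_def)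
  have "0 < d1" using dd_pos_MR[OF _ x1] assms(3) d1 by simp
  then have "2 * tau0 * tau1 < d1 * (tau0 + tau1)"
    using harmonic_bound_imp_mult_less assms(12,13,15) by simp
  moreover have "dd R x0 + dd R x2 < tau0 + tau1"
    using dd_sum_less_free_paths[OF x0] x1 x2 assms(8,9,12,13) by simp
  ultimately show ?thesis
    using neg_defocusing_two_bounces[OF assms(7,8,9,12,13)]
      dd_pos_Mr[OF x0, of R] dd_pos_Mr[OF x2, of R]
      \<open>0 < d1\<close> d1 by simp
qed

end
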